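(* For the objective of maximizing the expected accepted value, no deterministic order-unaware algorithm has order competitive ratio better than $\frac1\phi$, where $\phi=\frac{1+\sqrt5}{2}$. That is, for every deterministic order-unaware algorithm $\textsf{ALG}$ and every $\delta>0$, there exist an instance (independent distributions $F_1,\dots,F_m$ of nonnegative values) and an arrival order $\pi$ such that $\textsf{ALG}(\pi)\le\left(\frac1\phi+\delta\right)\textsf{OPT}(\pi)$.
   Context: Setting (prophet inequality, max-expectation objective): boxes contain independent values $v_i\sim F_i$ with known distributions; boxes arrive one at a time in an arrival order $\pi$; upon arrival a box's identity and realized value are revealed and an online algorithm must immediately and irrevocably accept it (stopping and receiving its value) or reject it forever; it receives $0$ if it accepts nothing. An order-aware algorithm knows $\pi$ in advance; a deterministic order-unaware algorithm's decision at each step is a deterministic function only of the distributions and the identities and realized values of the boxes that have arrived so far. $\textsf{ALG}(\pi)$ is the expected accepted value of $\textsf{ALG}$ under order $\pi$, and $\textsf{OPT}(\pi)$ is the maximum expected accepted value over all order-aware online algorithms under $\pi$. The order competitive ratio of $\textsf{ALG}$ is $\min_\pi \textsf{ALG}(\pi)/\textsf{OPT}(\pi)$ (worst case also over instances). *)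

theory Defs
  imports "HOL-Probability.Probability"
begin

text \<open>A history is the list of (identity, realized value) pairs of the boxes that have
  arrived so far (including the current box, which is last).\<close>

type_synonym inst = "real pmf list"
type_synonym history = "(nat \<times> real) list"

definition valid_instance :: "inst \<Rightarrow> bool" where
  "valid_instance F \<longleftrightarrow> (\<forall>i < length F. finite (set_pmf (F ! i)) \<and> set_pmf (F ! i) \<subseteq> {0..})"

definition is_order :: "inst \<Rightarrow> nat list \<Rightarrow> bool" where
  "is_order F \<pi> \<longleftrightarrow> distinct \<pi> \<and> set \<pi> = {..<length F}"

fun run_val :: "inst \<Rightarrow> (history \<Rightarrow> bool) \<Rightarrow> nat list \<Rightarrow> history \<Rightarrow> real" where
  "run_val F D [] h = 0"
| "run_val F D (i # rest) h =
     measure_pmf.expectation (F ! i)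
       (\<lambda>x. if D (h @ [(i, x)]) then x else run_val F D rest (h @ [(i, x)]))"

text \<open>A deterministic order-unaware algorithm: its decision depends only on the
  distributions (the inst) and the history.\<close>
type_synonym unaware_alg = "inst \<Rightarrow> history \<Rightarrow> bool"

definition ALG_val :: "unaware_alg \<Rightarrow> inst \<Rightarrow> nat list \<Rightarrow> real" where
  "ALG_val A F \<pi> = run_val F (A F) \<pi> []"

text \<open>OPT(pi): supremum (in fact maximum) of expected value over all order-aware online
  algorithms for the fixed order pi; for fixed pi such an algorithm is any decision rule on
  histories.\<close>
definition OPT_val :: "inst \<Rightarrow> nat list \<Rightarrow> real" where
  "OPT_val F \<pi> = (SUP D. run_val F D \<pi> [])"

definition golden_ratio :: real where
  "golden_ratio = (1 + sqrt 5) / 2"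

end

theory Submission
  imports Defs
begin

text \<open>Take deterministic boxes with slowly decreasing values \<open>1 = d\<^sub>0 > d\<^sub>1 > \<dots> > d\<^sub>N = r\<close>
  and one jackpot box worth \<open>H\<close> with a small probability \<open>p\<close>, where \<open>H p = r\<close>.  Feed the
  deterministic boxes in decreasing order; an order-unaware algorithm cannot tell where the
  jackpot will arrive, so the first step \<open>i\<close> it accepts is fixed in advance.  If \<open>i < N\<close>, let the
  jackpot arrive right after box \<open>i\<close>: the algorithm gets \<open>d\<^sub>i\<close>, whereas an order-aware algorithm
  waits, takes the jackpot if it pays and otherwise box \<open>i + 1\<close>, earning \<open>r + (1 - p) d\<^sub>i\<^sub>+\<^sub>1\<close>.
  Otherwise let the jackpot arrive last: the algorithm gets at most \<open>r\<close>, the optimum at least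
  \<open>1\<close>.  The first case costs a factor \<open>r\<close> as long as \<open>d\<^sub>i \<le> r (r + (1 - p) d\<^sub>i\<^sub>+\<^sub>1)\<close>, which
  small steps and small \<open>p\<close> achieve exactly when \<open>r\<^sup>2 + r > 1\<close>, i.e. \<open>r > 1 / \<phi>\<close>.\<close>

lemma run_val_Cons_return:
  assumes "F ! i = return_pmf v"
  shows "run_val F D (i # rest) h =
    (if D (h @ [(i, v)]) then v else run_val F D rest (h @ [(i, v)]))"
  using assms by simp

lemma run_val_bounded:
  assumes "\<forall>i \<in> set \<pi>. finite (set_pmf (F ! i))"
  shows "\<exists>B. \<forall>D h. run_val F D \<pi> h \<le> B"
  using assms
proof (induction \<pi>)
  case Nil
  show ?case by auto
next
  case (Cons i rest)
  then obtain B where B: "\<And>D h. run_val F D rest h \<le> B" by auto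
  have fin: "finite (set_pmf (F ! i))" using Cons.prems by simp
  define M where "M = max B (Max (set_pmf (F ! i)))"
  have "run_val F D (i # rest) h \<le> M" for D h
  proof -
    have "\<forall>x \<in> set_pmf (F ! i). (if D (h @ [(i, x)]) then x else run_val F D rest (h @ [(i, x)])) \<le> M"
      using B fin by (auto simp: M_def le_max_iff_disj)
    then show ?thesis
      using fin by (auto intro!: measure_pmf.integral_le_const integrable_measure_pmf_finite
                         simp: AE_measure_pmf_iff)
  qed
  then show ?case by blast
qed

lemma run_val_le_OPT_val:
  assumes "valid_instance F" "set \<pi> \<subseteq> {..<length F}"
  shows "run_val F D \<pi> [] \<le> OPT_val F \<pi>"
  unfolding OPT_val_def
proof (rule cSUP_upper)
  obtain B where "\<And>D h. run_val F D \<pi> h \<le> B"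
    using run_val_bounded[of \<pi> F] assms by (force simp: valid_instance_def)
  then show "bdd_above (range (\<lambda>D. run_val F D \<pi> []))"
    by (intro bdd_aboveI2)
qed simp

definition jackpot :: "real \<Rightarrow> real \<Rightarrow> real pmf" where
  "jackpot p H = map_pmf (\<lambda>b. if b then H else 0) (bernoulli_pmf p)"

lemma set_pmf_jackpot: "set_pmf (jackpot p H) \<subseteq> {H, 0}"
  by (auto simp: jackpot_def)

lemma run_val_Cons_jackpot:
  assumes "F ! i = jackpot p H" "0 \<le> p" "p \<le> 1"
  shows "run_val F D (i # rest) h =
    (if D (h @ [(i, H)]) then H else run_val F D rest (h @ [(i, H)])) * p
    + (if D (h @ [(i, 0)]) then 0 else run_val F D rest (h @ [(i, 0)])) * (1 - p)"
  using assms by (simp add: jackpot_def)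

definition det_history :: "(nat \<Rightarrow> real) \<Rightarrow> nat \<Rightarrow> history" where
  "det_history d m = map (\<lambda>j. (j, d j)) [0..<m]"

lemma det_history_0 [simp]: "det_history d 0 = []"
  by (simp add: det_history_def)

lemma det_history_Suc: "det_history d (Suc j) = det_history d j @ [(j, d j)]"
  by (simp add: det_history_def)

lemma run_val_skip_rejected:
  assumes "m \<le> k"
    and "\<And>j. m \<le> j \<Longrightarrow> j < k \<Longrightarrow> F ! j = return_pmf (d j) \<and> \<not> D (det_history d (Suc j))"
  shows "run_val F D ([m..<k] @ rest) (det_history d m) = run_val F D rest (det_history d k)"
  using assms
proof (induction k arbitrary: rest)
  case 0
  then show ?case by simp
next
  case (Suc k)
  show ?case
  proof (cases "m = Suc k")
    case False
    then have "m \<le> k" using Suc.prems by simp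
    then have "run_val F D ([m..<Suc k] @ rest) (det_history d m)
        = run_val F D (k # rest) (det_history d k)"
      using Suc by simp
    also have "\<dots> = run_val F D rest (det_history d (Suc k))"
      using Suc.prems(2)[of k] \<open>m \<le> k\<close> by (simp add: det_history_Suc)
    finally show ?thesis .
  qed simp
qed

definition staircase_instance :: "(nat \<Rightarrow> real) \<Rightarrow> nat \<Rightarrow> real \<Rightarrow> real \<Rightarrow> inst" where
  "staircase_instance d N p H = map (\<lambda>k. return_pmf (d k)) [0..<Suc N] @ [jackpot p H]"

lemma length_staircase_instance: "length (staircase_instance d N p H) = Suc (Suc N)"
  by (simp add: staircase_instance_def)

lemma staircase_instance_nth_step: "k \<le> N \<Longrightarrow> staircase_instance d N p H ! k = return_pmf (d k)"
  by (simp add: staircase_instance_def nth_append)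

lemma staircase_instance_nth_jackpot: "staircase_instance d N p H ! Suc N = jackpot p H"
  by (simp add: staircase_instance_def nth_append)

locale staircase =
  fixes d :: "nat \<Rightarrow> real" and N :: nat and p H r :: real
  assumes p_nonneg: "0 \<le> p" and p_le_1: "p \<le> 1"
    and step_nonneg: "\<And>k. k \<le> N \<Longrightarrow> 0 \<le> d k"
    and jackpot_pos: "0 < H * p"
    and step_ratio: "\<And>i. i < N \<Longrightarrow> d i \<le> r * (H * p + d (Suc i) * (1 - p))"
    and last_step_ratio: "d N \<le> r * d 0"
    and jackpot_ratio: "H * p \<le> r * d 0"
begin

abbreviation F :: inst where "F \<equiv> staircase_instance d N p H"

lemma H_pos: "0 < H"
  using jackpot_pos p_nonneg by (simp add: zero_less_mult_iff)

lemma r_pos: "0 < r" and first_step_pos: "0 < d 0"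
proof -
  have "0 < r * d 0" using jackpot_pos jackpot_ratio by linarith
  then show "0 < r" "0 < d 0" using step_nonneg[of 0] by (auto simp: zero_less_mult_iff)
qed

lemma valid_instance_staircase: "valid_instance F"
  unfolding valid_instance_def length_staircase_instance
proof (intro allI impI)
  fix i assume "i < Suc (Suc N)"
  then consider "i \<le> N" | "i = Suc N" by linarith
  then show "finite (set_pmf (F ! i)) \<and> set_pmf (F ! i) \<subseteq> {0..}"
  proof cases
    case 1
    then show ?thesis using step_nonneg by (simp add: staircase_instance_nth_step)
  next
    case 2
    then show ?thesis using set_pmf_jackpot[of p H] H_pos
      by (auto simp: staircase_instance_nth_jackpot intro: finite_subset)
  qed
qed

lemma run_val_le_OPT: "set \<pi> \<subseteq> {..Suc N} \<Longrightarrow> run_val F D \<pi> [] \<le> OPT_val F \<pi>"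
  using valid_instance_staircase by (intro run_val_le_OPT_val) (auto simp: length_staircase_instance)

lemma run_val_step:
  "k \<le> N \<Longrightarrow> run_val F D (k # rest) h =
     (if D (h @ [(k, d k)]) then d k else run_val F D rest (h @ [(k, d k)]))"
  by (simp add: run_val_Cons_return staircase_instance_nth_step)

lemma run_val_jackpot:
  "run_val F D (Suc N # rest) h =
    (if D (h @ [(Suc N, H)]) then H else run_val F D rest (h @ [(Suc N, H)])) * p
    + (if D (h @ [(Suc N, 0)]) then 0 else run_val F D rest (h @ [(Suc N, 0)])) * (1 - p)"
  by (rule run_val_Cons_jackpot[OF staircase_instance_nth_jackpot p_nonneg p_le_1])

lemma run_val_skip:
  assumes "m \<le> k" "k \<le> Suc N" "\<And>j. m \<le> j \<Longrightarrow> j < k \<Longrightarrow> \<not> D (det_history d (Suc j))"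
  shows "run_val F D ([m..<k] @ rest) (det_history d m) = run_val F D rest (det_history d k)"
  using assms by (intro run_val_skip_rejected) (auto simp: staircase_instance_nth_step)

lemma early_acceptance:
  fixes A :: unaware_alg
  assumes "i < N" "A F (det_history d (Suc i))" "\<And>j. j < i \<Longrightarrow> \<not> A F (det_history d (Suc j))"
  shows "\<exists>\<pi>. is_order F \<pi> \<and> 0 < OPT_val F \<pi> \<and> ALG_val A F \<pi> \<le> r * OPT_val F \<pi>"
proof -
  define \<pi> where "\<pi> = [0..<Suc i] @ Suc N # [Suc i..<Suc N]"
  have order: "is_order F \<pi>"
    using assms(1) by (auto simp: \<pi>_def is_order_def length_staircase_instance)
  have "ALG_val A F \<pi> = run_val F (A F) ([0..<i] @ i # Suc N # [Suc i..<Suc N]) (det_history d 0)"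
    by (simp add: ALG_val_def \<pi>_def det_history_def)
  also have "\<dots> = run_val F (A F) (i # Suc N # [Suc i..<Suc N]) (det_history d i)"
    using assms by (intro run_val_skip) auto
  also have "\<dots> = d i"
    using assms by (simp add: run_val_step det_history_Suc del: run_val.simps(2))
  finally have ALG: "ALG_val A F \<pi> = d i" .
  \<comment> \<open>Order-aware: take the jackpot if it pays, otherwise the step right after it.\<close>
  define D :: "history \<Rightarrow> bool" where "D h \<longleftrightarrow> last h = (Suc N, H) \<or> fst (last h) = Suc i" for h
  have "\<pi> = [0..<Suc i] @ Suc N # Suc i # [Suc (Suc i)..<Suc N]"
    using assms(1) by (simp add: \<pi>_def upt_conv_Cons del: upt_Suc)
  then have "run_val F D \<pi> [] =
      run_val F D ([0..<Suc i] @ Suc N # Suc i # [Suc (Suc i)..<Suc N]) (det_history d 0)"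
    by simp
  also have "\<dots> = run_val F D (Suc N # Suc i # [Suc (Suc i)..<Suc N]) (det_history d (Suc i))"
    using assms(1) by (intro run_val_skip) (auto simp: D_def det_history_Suc)
  also have "\<dots> = H * p + d (Suc i) * (1 - p)"
    using assms(1) H_pos by (simp add: run_val_jackpot run_val_step D_def del: run_val.simps(2))
  moreover have "set \<pi> \<subseteq> {..Suc N}"
    using assms(1) by (auto simp: \<pi>_def)
  ultimately have OPT: "H * p + d (Suc i) * (1 - p) \<le> OPT_val F \<pi>"
    using run_val_le_OPT by metis
  have "0 \<le> d (Suc i) * (1 - p)"
    using step_nonneg[of "Suc i"] assms(1) p_le_1 by simp
  then have "0 < OPT_val F \<pi>"
    using OPT jackpot_pos by linarith
  moreover have "ALG_val A F \<pi> \<le> r * OPT_val F \<pi>"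
  proof -
    have "r * (H * p + d (Suc i) * (1 - p)) \<le> r * OPT_val F \<pi>"
      using mult_left_mono[OF OPT] r_pos by simp
    then show ?thesis using ALG step_ratio[OF assms(1)] by linarith
  qed
  ultimately show ?thesis using order by blast
qed

lemma late_acceptance:
  fixes A :: unaware_alg
  assumes "\<And>j. j < N \<Longrightarrow> \<not> A F (det_history d (Suc j))"
  shows "\<exists>\<pi>. is_order F \<pi> \<and> 0 < OPT_val F \<pi> \<and> ALG_val A F \<pi> \<le> r * OPT_val F \<pi>"
proof -
  define \<pi> where "\<pi> = [0..<Suc (Suc N)]"
  have order: "is_order F \<pi>"
    by (auto simp: \<pi>_def is_order_def length_staircase_instance)
  have "run_val F (\<lambda>_. True) \<pi> [] = d 0"
    unfolding \<pi>_def upt_conv_Cons[OF zero_less_Suc] by (simp add: run_val_step del: run_val.simps(2))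
  moreover have "set \<pi> \<subseteq> {..Suc N}"
    by (auto simp: \<pi>_def)
  ultimately have OPT: "d 0 \<le> OPT_val F \<pi>"
    using run_val_le_OPT by metis
  have "ALG_val A F \<pi> = run_val F (A F) ([0..<N] @ N # [Suc N]) (det_history d 0)"
    by (simp add: ALG_val_def \<pi>_def det_history_def)
  also have "\<dots> = run_val F (A F) (N # [Suc N]) (det_history d N)"
    using assms by (intro run_val_skip) auto
  also have "\<dots> \<le> r * d 0"
  proof -
    have "run_val F (A F) [Suc N] h \<le> H * p" for h
      using H_pos p_nonneg by (simp add: run_val_jackpot del: run_val.simps(2))
    then show ?thesis
      using last_step_ratio jackpot_ratio
      by (simp add: run_val_step det_history_Suc del: run_val.simps(2)) (meson order_trans)
  qed
  also have "\<dots> \<le> r * OPT_val F \<pi>"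
    using mult_left_mono[OF OPT] r_pos by simp
  finally have "ALG_val A F \<pi> \<le> r * OPT_val F \<pi>" .
  then show ?thesis
    using order OPT first_step_pos by force
qed

lemma hard_order_exists:
  fixes A :: unaware_alg
  shows "\<exists>\<pi>. is_order F \<pi> \<and> 0 < OPT_val F \<pi> \<and> ALG_val A F \<pi> \<le> r * OPT_val F \<pi>"
proof (cases "\<exists>i<N. A F (det_history d (Suc i))")
  case True
  define i where "i = (LEAST i. i < N \<and> A F (det_history d (Suc i)))"
  have "i < N" "A F (det_history d (Suc i))"
    using LeastI_ex[OF True] by (auto simp: i_def)
  moreover have "\<And>j. j < i \<Longrightarrow> \<not> A F (det_history d (Suc j))"
    using \<open>i < N\<close> not_less_Least by (fastforce simp: i_def)
  ultimately show ?thesis by (rule early_acceptance)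
next
  case False
  then show ?thesis by (intro late_acceptance) auto
qed

end

lemma inverse_golden_ratio: "1 / golden_ratio = (sqrt 5 - 1) / 2"
proof -
  have "0 < 1 + sqrt 5" by (simp add: add_pos_nonneg)
  then show ?thesis
    by (simp add: golden_ratio_def field_simps)
qed

lemma inverse_golden_ratio_pos: "0 < 1 / golden_ratio"
  and inverse_golden_ratio_less_1: "1 / golden_ratio < 1"
proof -
  have "sqrt 1 < sqrt 5" "sqrt 5 < sqrt 9" by (simp_all only: real_sqrt_less_iff)
  then show "0 < 1 / golden_ratio" "1 / golden_ratio < 1"
    by (simp_all add: inverse_golden_ratio)
qed

lemma above_inverse_golden_ratio:
  assumes "1 / golden_ratio < r"
  shows "0 < r\<^sup>2 + r - 1"
proof -
  define g where "g = 1 / golden_ratio"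
  have "g\<^sup>2 + g = 1"
    by (simp add: g_def inverse_golden_ratio power2_eq_square field_simps)
  then have "r\<^sup>2 + r - 1 = (r - g) * (r + g + 1)"
    by (simp add: power2_eq_square algebra_simps)
  moreover have "0 < g" "g < r"
    using inverse_golden_ratio_pos assms by (simp_all add: g_def)
  ultimately show ?thesis by simp
qed

lemma staircase_step_arith:
  fixes c q r :: real
  assumes "0 \<le> c" "0 \<le> q" "q \<le> 1" "c \<le> r\<^sup>2 + q - 1"
  shows "1 - real i * c \<le> r\<^sup>2 + q * (1 - (real i + 1) * c)"
proof -
  have "r\<^sup>2 + q * (1 - (real i + 1) * c) - (1 - real i * c)
      = (r\<^sup>2 + q - 1 - c) + c * (1 - q) + real i * c * (1 - q)"
    by (simp add: algebra_simps)
  moreover have "0 \<le> c * (1 - q)" "0 \<le> real i * c * (1 - q)"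
    using assms by simp_all
  ultimately show ?thesis using assms(4) by linarith
qed

lemma golden_staircase_exists:
  assumes "1 / golden_ratio < r" "r < 1"
  shows "\<exists>d N p H. staircase d N p H r"
proof -
  define e where "e = r\<^sup>2 + r - 1"
  have r_pos: "0 < r" using assms inverse_golden_ratio_pos by linarith
  have e_pos: "0 < e" using above_inverse_golden_ratio[OF assms(1)] by (simp add: e_def)
  have "r\<^sup>2 < r" using r_pos assms(2) by (simp add: power2_eq_square)
  then have e_less: "e < 2 * r" by (simp add: e_def)
  obtain N :: nat where N: "2 * (1 - r) / e < real N"
    using reals_Archimedean2 by blast
  have "0 < 2 * (1 - r) / e"
    using assms(2) e_pos by simp
  with N have N_pos: "0 < real N"
    by linarith
  define c where "c = (1 - r) / real N"
  define p where "p = e / (2 * r)"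
  define H where "H = r / p"
  define d where "d k = 1 - real k * c" for k
  have c_nonneg: "0 \<le> c" and c_le: "c \<le> e / 2" and Nc: "real N * c = 1 - r"
    using assms(2) N N_pos e_pos by (simp_all add: c_def field_simps)
  have p_bounds: "0 < p" "p < 1" and Hp: "H * p = r"
    using r_pos e_pos e_less by (simp_all add: p_def H_def field_simps)
  have q: "r * (1 - p) = r - e / 2"
    using r_pos by (simp add: p_def field_simps)
  have d_ge_r: "r \<le> d k" if "k \<le> N" for k
    using mult_right_mono[of "real k" "real N" c] that c_nonneg Nc by (simp add: d_def)
  show ?thesis
  proof (intro exI staircase.intro)
    show "0 \<le> p" "p \<le> 1" "0 < H * p" "H * p \<le> r * d 0" "d N \<le> r * d 0"
      using p_bounds Hp r_pos Nc by (simp_all add: d_def)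
    show "0 \<le> d k" if "k \<le> N" for k
      using d_ge_r[OF that] r_pos by simp
    show "d i \<le> r * (H * p + d (Suc i) * (1 - p))" for i
    proof -
      have "r\<^sup>2 + (r - e / 2) - 1 = e / 2"
        using e_def by linarith
      then have "d i \<le> r\<^sup>2 + (r - e / 2) * (1 - (real i + 1) * c)"
        unfolding d_def using c_nonneg c_le e_pos e_less assms(2)
        by (intro staircase_step_arith) linarith+
      moreover have "r * (H * p + d (Suc i) * (1 - p)) = r\<^sup>2 + r * (1 - p) * d (Suc i)"
        by (simp add: Hp power2_eq_square algebra_simps)
      ultimately show ?thesis
        by (simp add: q d_def add.commute)
    qed
  qed
qed

lemma hard_instance_exists:
  assumes "1 / golden_ratio < r" "r < 1"
  shows "\<exists>F \<pi>. valid_instance F \<and> is_order F \<pi> \<and> OPT_val F \<pi> > 0 \<and>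
           ALG_val A F \<pi> \<le> r * OPT_val F \<pi>"
proof -
  obtain d N p H where "staircase d N p H r"
    using golden_staircase_exists[OF assms] by blast
  then interpret staircase d N p H r .
  show ?thesis using valid_instance_staircase hard_order_exists[of A] by blast
qed

theorem theorem3p3:
  fixes A :: unaware_alg and \<delta> :: real
  assumes "\<delta> > 0"
  shows "\<exists>F \<pi>. valid_instance F \<and> is_order F \<pi> \<and> OPT_val F \<pi> > 0 \<and>
           ALG_val A F \<pi> \<le> (1 / golden_ratio + \<delta>) * OPT_val F \<pi>"
proof -
  define r where "r = min (1 / golden_ratio + \<delta>) ((1 / golden_ratio + 1) / 2)"
  have "1 / golden_ratio < r" "r < 1" "r \<le> 1 / golden_ratio + \<delta>"
    using assms inverse_golden_ratio_less_1 by (auto simp: r_def min_less_iff_disj)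
  then obtain F \<pi> where "valid_instance F" "is_order F \<pi>" "OPT_val F \<pi> > 0"
      and "ALG_val A F \<pi> \<le> r * OPT_val F \<pi>"
    using hard_instance_exists by blast
  moreover have "r * OPT_val F \<pi> \<le> (1 / golden_ratio + \<delta>) * OPT_val F \<pi>"
    using \<open>r \<le> _\<close> \<open>OPT_val F \<pi> > 0\<close> by (simp add: mult_right_mono)
  ultimately show ?thesis by (meson order_trans)
qed

end
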